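(* Let $n\ge 2$ be an integer and let $n=n_0+n_1$ with integers $n_0\ge n_1\ge 1$. Then $(n_0,n_1)$ is a hypercubic bipartition (HCBP) of $n$ if and only if $f(n)=n_1+f(n_1)+f(n_0)$.
   Context: Let $f:\mathbb{N}\to\mathbb{N}_0$ be defined by $f(1)=0$ and $f(n)=\lfloor n/2\rfloor+f(\lfloor n/2\rfloor)+f(\lceil n/2\rceil)$ for $n>1$. For $k\ge 0$ and $0\le m<2^k$, let $\beta_k(m)\in\{0,1\}^k$ be the point whose $j$-th coordinate is the binary digit of $m$ of weight $2^{k-j}$ (so the last binary digit of $m$ is the $k$-th coordinate). For $n\ge 2$ put $k=\lceil \log_2 n\rceil$. A pair $(n_0,n_1)$ of integers with $n=n_0+n_1$ and $n_0\ge n_1\ge 1$ is a hypercubic bipartition (HCBP) of $n$ if there is $i\in\{1,\dots,k\}$ such that the hyperplane $x_i=1/2$ splits the $n$ points $\beta_k(0),\dots,\beta_k(n-1)$ into $n_0$ points on one side and $n_1$ points on the other (i.e. among these points, $n_0$ have one value of the $i$-th coordinate and $n_1$ have the other). *)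

theory Defs
  imports Complex_Main
begin

text \<open>The function f, with f(1) = 0 and
  f(n) = floor(n/2) + f(floor(n/2)) + f(ceil(n/2)) for n > 1.
  (The value at 0 is outside the paper's domain and set to 0.)\<close>
function f :: "nat \<Rightarrow> nat" where
  "f n = (if n \<le> 1 then 0 else n div 2 + f (n div 2) + f ((n + 1) div 2))"
  by auto
termination
  by (relation "measure id") auto

text \<open>j-th coordinate (1 \<le> j \<le> k) of beta_k(m): the binary digit of m of weight 2^(k-j).\<close>
definition beta :: "nat \<Rightarrow> nat \<Rightarrow> nat \<Rightarrow> nat" where
  "beta k m j = m div 2 ^ (k - j) mod 2"

definition clog2 :: "nat \<Rightarrow> nat" where
  "clog2 n = nat \<lceil>log 2 (real n)\<rceil>"

definition HCBP :: "nat \<Rightarrow> nat \<Rightarrow> nat \<Rightarrow> bool" where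
  "HCBP n n0 n1 \<longleftrightarrow> n = n0 + n1 \<and> n0 \<ge> n1 \<and> n1 \<ge> 1 \<and>
     (\<exists>i\<in>{1..clog2 n}.
        (card {m. m < n \<and> beta (clog2 n) m i = 0} = n0 \<and>
         card {m. m < n \<and> beta (clog2 n) m i = 1} = n1) \<or>
        (card {m. m < n \<and> beta (clog2 n) m i = 1} = n0 \<and>
         card {m. m < n \<and> beta (clog2 n) m i = 0} = n1))"

end

theory Submission
  imports Defs
begin

text \<open>Write \<open>D(x, y) = f(x + y) - f x - f y - min x y\<close> (\<open>f_defect\<close>). The recursion for \<open>f\<close>
  gives \<open>D(2p, 2q) = 2 D(p, q)\<close>, \<open>D(2p, 2q + 1) = D(p, q) + D(p, q + 1)\<close> and
  \<open>D(2p + 1, 2q + 1) = D(p + 1, q) + D(p, q + 1) + [p \<noteq> q]\<close>, so \<open>D \<ge> 0\<close>.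
  The hyperplane \<open>x\<^sub>i = 1/2\<close> splits \<open>0, \<dots>, n - 1\<close> by a single binary digit. The number of
  \<open>m < n\<close> with digit \<open>j + 1\<close> set is the sum of the numbers of \<open>m < \<lfloor>n/2\<rfloor>\<close> and \<open>m < \<lceil>n/2\<rceil>\<close> with
  digit \<open>j\<close> set, the same recursion as for \<open>f\<close>, so by induction on the digit \<open>D\<close> vanishes on
  every hypercubic bipartition. Conversely, induction on \<open>x + y\<close> shows that \<open>D(x, y) = 0\<close> forces
  \<open>(x, y)\<close> to be a digit split; the only delicate case \<open>(2p, 2q + 1)\<close> needs that a common side
  \<open>p\<close> of splits of \<open>m = p + q\<close> and of \<open>m + 1\<close> yields a side \<open>2p\<close> of a split of \<open>2m + 1\<close>, which is
  a parity argument on the digit counts.\<close>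

declare f.simps[simp del]

lemma f_0 [simp]: "f 0 = 0"
  by (subst f.simps) simp

lemma f_double: "f (2 * k) = k + 2 * f k"
  by (cases "k = 0") (simp, subst f.simps, simp)

lemma f_double_Suc: "f (2 * k + 1) = k + f k + f (k + 1)"
  by (cases "k = 0") (simp, subst f.simps, simp)

lemma f_halves: "f n = n div 2 + f (n div 2) + f (n - n div 2)"
proof (cases "even n")
  case True
  then have "n = 2 * (n div 2)" "n - n div 2 = n div 2" by presburger+
  then show ?thesis using f_double[of "n div 2"] by simp
next
  case False
  then have "n = 2 * (n div 2) + 1" "n - n div 2 = n div 2 + 1" by presburger+
  then show ?thesis using f_double_Suc[of "n div 2"] by simp
qed

definition f_defect :: "nat \<Rightarrow> nat \<Rightarrow> int" where
  "f_defect x y = int (f (x + y)) - f x - f y - min x y"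

lemma f_defect_commute: "f_defect x y = f_defect y x"
  unfolding f_defect_def by (simp add: add.commute min.commute)

lemma f_defect_0 [simp]: "f_defect x 0 = 0"
  by (simp add: f_defect_def)

lemma f_defect_double: "f_defect (2 * x) (2 * y) = 2 * f_defect x y"
proof -
  have "2 * x + 2 * y = 2 * (x + y)" by simp
  then show ?thesis by (simp only: f_defect_def f_double) (simp add: min_def)
qed

lemma f_defect_double_double_Suc:
  "f_defect (2 * x) (2 * y + 1) = f_defect x y + f_defect x (y + 1)"
proof -
  have "2 * x + (2 * y + 1) = 2 * (x + y) + 1" "x + (y + 1) = x + y + 1" by simp_all
  then show ?thesis by (simp only: f_defect_def f_double f_double_Suc min_def) simp
qed

lemma f_defect_double_Suc:
  "f_defect (2 * x + 1) (2 * y + 1) = f_defect (x + 1) y + f_defect x (y + 1) + of_bool (x \<noteq> y)"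
proof -
  have "2 * x + 1 + (2 * y + 1) = 2 * (x + y + 1)" "x + 1 + y = x + y + 1" "x + (y + 1) = x + y + 1"
    by simp_all
  then show ?thesis by (simp only: f_defect_def f_double f_double_Suc) (simp add: min_def)
qed

lemma f_defect_nonneg: "f_defect x y \<ge> 0"
proof (induction "x + y" arbitrary: x y rule: less_induct)
  case less
  show ?case
  proof (cases "x = 0 \<or> y = 0")
    case True
    then show ?thesis by (auto simp: f_defect_commute[of 0])
  next
    case False
    define p q where "p = x div 2" and "q = y div 2"
    then have x: "x = 2 * p \<or> x = 2 * p + 1" and y: "y = 2 * q \<or> y = 2 * q + 1"
      by presburger+
    with False have smaller: "p + q < x + y" "p + (q + 1) < x + y" "q + (p + 1) < x + y"
      by auto
    from x y consider "x = 2 * p" "y = 2 * q" | "x = 2 * p" "y = 2 * q + 1"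
      | "x = 2 * p + 1" "y = 2 * q" | "x = 2 * p + 1" "y = 2 * q + 1"
      by blast
    then show ?thesis
    proof cases
      case 1
      then show ?thesis using less smaller by (simp add: f_defect_double)
    next
      case 2
      then have "f_defect x y = f_defect p q + f_defect p (q + 1)"
        by (simp only: f_defect_double_double_Suc)
      then show ?thesis using less smaller by simp
    next
      case 3
      then have "f_defect x y = f_defect q p + f_defect q (p + 1)"
        using f_defect_commute[of x] by (simp only: f_defect_double_double_Suc)
      then show ?thesis using less smaller by simp
    next
      case 4
      then have "f_defect x y = f_defect (p + 1) q + f_defect p (q + 1) + of_bool (p \<noteq> q)"
        by (simp only: f_defect_double_Suc)
      then show ?thesis using less[of "p + 1" q] less[of p "q + 1"] smaller by simp
    qed
  qed
qed

lemma f_defect_double_double_Suc_eq_0: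
  "f_defect (2 * x) (2 * y + 1) = 0 \<longleftrightarrow> f_defect x y = 0 \<and> f_defect x (y + 1) = 0"
  unfolding f_defect_double_double_Suc
  using f_defect_nonneg[of x y] f_defect_nonneg[of x "y + 1"] by linarith

lemma f_defect_double_Suc_eq_0: "f_defect (2 * x + 1) (2 * y + 1) = 0 \<Longrightarrow> x = y"
  unfolding f_defect_double_Suc
  using f_defect_nonneg[of "x + 1" y] f_defect_nonneg[of x "y + 1"] by (cases "x = y") simp_all

definition bit_count :: "nat \<Rightarrow> nat \<Rightarrow> nat" where
  "bit_count j n = card {m. m < n \<and> bit m j}"

lemma bit_count_0 [simp]: "bit_count j 0 = 0"
  by (simp add: bit_count_def)

lemma bit_count_Suc: "bit_count j (Suc n) = bit_count j n + of_bool (bit n j)"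
proof -
  have "{m. m < Suc n \<and> bit m j} = {m. m < n \<and> bit m j} \<union> (if bit n j then {n} else {})"
    by (auto simp: less_Suc_eq)
  then show ?thesis by (simp add: bit_count_def)
qed

lemma bit_count_le: "bit_count j n \<le> n"
  by (induction n) (simp_all add: bit_count_Suc)

lemma bit_count_lowest: "bit_count 0 n = n div 2"
proof (induction n)
  case (Suc n)
  then show ?case by (simp add: bit_count_Suc bit_0)
qed simp

lemma bit_count_eq_0: "n \<le> 2 ^ j \<Longrightarrow> bit_count j n = 0"
  by (induction n) (simp_all add: bit_count_Suc bit_iff_odd)

lemma bit_count_double: "bit_count (Suc j) (2 * k) = 2 * bit_count j k"
  by (induction k) (simp_all add: bit_count_Suc bit_Suc)

lemma bit_count_double_Suc: "bit_count (Suc j) (Suc (2 * k)) = 2 * bit_count j k + of_bool (bit k j)"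
  by (simp only: bit_count_Suc bit_count_double bit_Suc) simp

text \<open>The number of \<open>m < n\<close> whose \<open>j\<close>-th bit agrees with that of \<open>n\<close>, i.e.\ the side of the
  split of \<open>{0..<n}\<close> by bit \<open>j\<close> that \<open>n\<close> joins.\<close>

definition agree_count :: "nat \<Rightarrow> nat \<Rightarrow> nat" where
  "agree_count j n = (if bit n j then bit_count j n else n - bit_count j n)"

lemma agree_count_le: "agree_count j n \<le> n"
  by (simp add: agree_count_def bit_count_le)

lemma agree_count_lowest: "agree_count 0 n = n div 2"
  by (auto simp: agree_count_def bit_count_lowest bit_0 elim: evenE)

lemma agree_count_double: "agree_count (Suc j) (2 * k) = 2 * agree_count j k"
  using bit_count_le[of j k] by (simp add: agree_count_def bit_count_double bit_Suc diff_mult_distrib2)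

lemma agree_count_double_Suc: "agree_count (Suc j) (Suc (2 * k)) = Suc (2 * agree_count j k)"
  using bit_count_le[of j k] by (auto simp: agree_count_def bit_count_double_Suc bit_Suc)

lemma agree_count_Suc_index: "agree_count (Suc j) n = 2 * agree_count j (n div 2) + n mod 2"
proof (cases "even n")
  case True
  then have "n = 2 * (n div 2)" by simp
  then show ?thesis using True agree_count_double[of j "n div 2"] by simp
next
  case False
  then have "n = Suc (2 * (n div 2))" by simp
  then show ?thesis
    using False agree_count_double_Suc[of j "n div 2"] by (simp add: odd_iff_mod_2_eq_one)
qed

lemma odd_agree_count_Suc_index: "odd (agree_count (Suc j) n) \<longleftrightarrow> odd n"
  by (simp add: agree_count_Suc_index)

definition bit_split :: "nat \<Rightarrow> nat \<Rightarrow> bool" where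
  "bit_split n x \<longleftrightarrow> (\<exists>j. x = bit_count j n \<or> x = n - bit_count j n)"

lemma bit_split_compl:
  assumes "bit_split n x"
  shows "bit_split n (n - x)"
proof -
  from assms obtain j where "x = bit_count j n \<or> x = n - bit_count j n"
    unfolding bit_split_def by blast
  then have "n - x = n - bit_count j n \<or> n - x = bit_count j n"
    using bit_count_le[of j n] by auto
  then show ?thesis unfolding bit_split_def by blast
qed

lemma bit_split_iff_agree_count:
  "bit_split n x \<longleftrightarrow> (\<exists>j. x = agree_count j n \<or> x = n - agree_count j n)"
proof -
  have "(x = agree_count j n \<or> x = n - agree_count j n) \<longleftrightarrow>
      (x = bit_count j n \<or> x = n - bit_count j n)" for j
    using bit_count_le[of j n] by (auto simp: agree_count_def)
  then show ?thesis unfolding bit_split_def by blast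
qed

lemma bit_split_Suc_iff_agree_count:
  "bit_split (Suc n) x \<longleftrightarrow> (\<exists>j. x = agree_count j n + 1 \<or> x = n - agree_count j n)"
proof -
  have "(x = agree_count j n + 1 \<or> x = n - agree_count j n) \<longleftrightarrow>
      (x = bit_count j (Suc n) \<or> x = Suc n - bit_count j (Suc n))" for j
    using bit_count_le[of j n] by (auto simp: agree_count_def bit_count_Suc)
  then show ?thesis unfolding bit_split_def by blast
qed

lemma bit_split_double:
  assumes "bit_split n x"
  shows "bit_split (2 * n) (2 * x)"
proof -
  from assms obtain j where "x = bit_count j n \<or> x = n - bit_count j n"
    unfolding bit_split_def by blast
  then have "2 * x = bit_count (Suc j) (2 * n) \<or> 2 * x = 2 * n - bit_count (Suc j) (2 * n)"
    by (auto simp: bit_count_double)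
  then show ?thesis unfolding bit_split_def by blast
qed

text \<open>Since \<open>agree_count (Suc i) m \<equiv> m (mod 2)\<close> for all \<open>i\<close>, two agreement counts that differ
  by one must involve index 0, i.e.\ \<open>m div 2\<close>; the other one then fixes the parity of the
  larger count \<open>p\<close>, and in the residues of \<open>m\<close> modulo 4 where \<open>m\<close> is not \<open>2 p\<close> or \<open>2 p - 1\<close>,
  index 1 turns out to count the complement \<open>m - p\<close>.\<close>

lemma agree_count_consecutive:
  assumes "p = agree_count i m" and "p = agree_count j m + 1"
  shows "m = 2 * p \<or> m + 1 = 2 * p \<or> agree_count (Suc 0) m = m - p"
proof (cases i)
  case 0
  then have half: "p = m div 2" using assms(1) by (simp add: agree_count_lowest)
  have "j \<noteq> 0"
  proof
    assume "j = 0"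
    with half assms(2) show False by (simp add: agree_count_lowest)
  qed
  then obtain j' where "j = Suc j'" using not0_implies_Suc by blast
  then have parity: "odd m \<longleftrightarrow> even p" using assms(2) odd_agree_count_Suc_index[of j' m] by simp
  show ?thesis
  proof (cases "even m")
    case False
    with parity obtain r where r: "p = 2 * r" by blast
    with half False have "m = 4 * r + 1" by (elim oddE) simp
    with r show ?thesis by (simp add: agree_count_Suc_index agree_count_lowest mod_Suc)
  qed (use half in simp)
next
  case (Suc i')
  have "j = 0"
  proof (rule ccontr)
    assume "j \<noteq> 0"
    then obtain j' where "j = Suc j'" using not0_implies_Suc by blast
    then have "odd (agree_count j m) \<longleftrightarrow> odd m" using odd_agree_count_Suc_index by simp
    moreover have "odd (agree_count j m + 1) \<longleftrightarrow> odd m"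
      using Suc assms odd_agree_count_Suc_index[of i' m] by simp
    ultimately show False by simp
  qed
  then have half: "p = m div 2 + 1" using assms(2) by (simp add: agree_count_lowest)
  have parity: "odd m \<longleftrightarrow> odd p" using Suc assms(1) odd_agree_count_Suc_index[of i' m] by simp
  show ?thesis
  proof (cases "even m")
    case True
    with parity obtain r where r: "p = 2 * r" by blast
    with half obtain s where s: "r = Suc s" using not0_implies_Suc by fastforce
    with half r True have "m = 4 * s + 2" by (elim evenE) simp
    with r s show ?thesis by (simp add: agree_count_Suc_index agree_count_lowest)
  qed (use half in \<open>auto elim: oddE\<close>)
qed

lemma bit_split_double_Suc:
  assumes "bit_split m p" and "bit_split (Suc m) p" and "p \<le> m"
  shows "bit_split (2 * m + 1) (2 * p)"
proof (cases "\<exists>i. agree_count i m = m - p")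
  case True
  then obtain i where "agree_count (Suc i) (2 * m + 1) = 2 * (m - p) + 1"
    by (auto simp: agree_count_Suc_index)
  then have "2 * p = 2 * m + 1 - agree_count (Suc i) (2 * m + 1)"
    using \<open>p \<le> m\<close> by simp
  then show ?thesis unfolding bit_split_iff_agree_count by blast
next
  case False
  have not_compl: "p \<noteq> m - agree_count j m" for j
  proof
    assume "p = m - agree_count j m"
    then have "agree_count j m = m - p" using agree_count_le[of j m] by simp
    with False show False by blast
  qed
  obtain i where "p = agree_count i m"
    using assms(1) not_compl unfolding bit_split_iff_agree_count by blast
  moreover obtain j where "p = agree_count j m + 1"
    using assms(2) not_compl unfolding bit_split_Suc_iff_agree_count by blast
  ultimately have "m = 2 * p \<or> m + 1 = 2 * p"
    using agree_count_consecutive False by blast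
  then have "2 * p = bit_count 0 (2 * m + 1) \<or> 2 * p = 2 * m + 1 - bit_count 0 (2 * m + 1)"
    by (auto simp: bit_count_lowest)
  then show ?thesis unfolding bit_split_def by blast
qed

lemma f_defect_bit_count: "f_defect (bit_count j n) (n - bit_count j n) = 0"
proof (induction j arbitrary: n)
  case 0
  show ?case using f_halves[of n] by (simp add: f_defect_def bit_count_lowest)
next
  case (Suc j)
  show ?case
  proof (cases "even n")
    case True
    then obtain k where n: "n = 2 * k" by blast
    then have "n - bit_count (Suc j) n = 2 * (k - bit_count j k)"
      by (simp add: bit_count_double diff_mult_distrib2)
    then show ?thesis using n Suc[of k] by (simp add: bit_count_double f_defect_double)
  next
    case False
    then obtain k where n: "n = 2 * k + 1" using oddE by blast
    define x y where "x = bit_count j k" and "y = k - x"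
    have "x \<le> k" unfolding x_def by (rule bit_count_le)
    have IH: "f_defect x y = 0" unfolding x_def y_def by (rule Suc)
    show ?thesis
    proof (cases "bit k j")
      case True
      then have "bit_count (Suc j) n = 2 * x + 1" "n - bit_count (Suc j) n = 2 * y"
        using n \<open>x \<le> k\<close> unfolding x_def y_def by (simp_all add: bit_count_double_Suc)
      then have "f_defect (bit_count (Suc j) n) (n - bit_count (Suc j) n) =
          f_defect (2 * y) (2 * x + 1)"
        by (simp only: f_defect_commute[of "2 * x + 1"])
      also have "\<dots> = f_defect x y + f_defect (x + 1) y"
        by (simp only: f_defect_double_double_Suc f_defect_commute[of y])
      also have "f_defect (x + 1) y = 0"
        using Suc[of "k + 1"] True \<open>x \<le> k\<close> by (simp add: x_def y_def bit_count_Suc)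
      finally show ?thesis using IH by simp
    next
      case False
      then have "bit_count (Suc j) n = 2 * x" "n - bit_count (Suc j) n = 2 * y + 1"
        using n \<open>x \<le> k\<close> unfolding x_def y_def by (simp_all add: bit_count_double_Suc)
      moreover have "f_defect x (y + 1) = 0"
        using Suc[of "k + 1"] False \<open>x \<le> k\<close> by (simp add: x_def y_def bit_count_Suc Suc_diff_le)
      ultimately show ?thesis using IH by (simp only: f_defect_double_double_Suc)
    qed
  qed
qed

lemma bit_split_if_f_defect_eq_0: "f_defect x y = 0 \<Longrightarrow> bit_split (x + y) x"
proof (induction "x + y" arbitrary: x y rule: less_induct)
  case less
  show ?case
  proof (cases "x = 0 \<or> y = 0")
    case True
    have "bit_count (x + y) (x + y) = 0" by (rule bit_count_eq_0) simp
    with True have "x = bit_count (x + y) (x + y) \<or> x = x + y - bit_count (x + y) (x + y)"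
      by auto
    then show ?thesis unfolding bit_split_def by blast
  next
    case False
    define p q where "p = x div 2" and "q = y div 2"
    then have x: "x = 2 * p \<or> x = 2 * p + 1" and y: "y = 2 * q \<or> y = 2 * q + 1"
      by presburger+
    have even_odd: "bit_split (2 * a + (2 * b + 1)) (2 * a)"
      if "f_defect (2 * a) (2 * b + 1) = 0" "2 * a + (2 * b + 1) = x + y" "a > 0" for a b
    proof -
      have "f_defect a b = 0" "f_defect a (b + 1) = 0"
        using that(1) unfolding f_defect_double_double_Suc_eq_0 by simp_all
      with that(2,3) have "bit_split (a + b) a" "bit_split (Suc (a + b)) a"
        using less(1)[of a b] less(1)[of a "b + 1"] by simp_all
      then have "bit_split (2 * (a + b) + 1) (2 * a)"
        by (rule bit_split_double_Suc) simp
      then show ?thesis by (simp add: algebra_simps)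
    qed
    from x y consider "x = 2 * p" "y = 2 * q" | "x = 2 * p" "y = 2 * q + 1"
      | "x = 2 * p + 1" "y = 2 * q" | "x = 2 * p + 1" "y = 2 * q + 1"
      by blast
    then show ?thesis
    proof cases
      case 1
      then have "f_defect p q = 0" using less.prems by (simp add: f_defect_double)
      with 1 False have "bit_split (p + q) p" using less(1)[of p q] by simp
      then have "bit_split (2 * (p + q)) (2 * p)" by (rule bit_split_double)
      with 1 show ?thesis by (simp add: algebra_simps)
    next
      case 2
      with False less.prems show ?thesis using even_odd[of p q] by simp
    next
      case 3
      with False less.prems f_defect_commute[of x y] have "bit_split (x + y) y"
        using even_odd[of q p] by (simp add: add.commute)
      then have "bit_split (x + y) (x + y - y)" by (rule bit_split_compl)
      then show ?thesis by simp
    next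
      case 4
      then have "p = q" using less.prems f_defect_double_Suc_eq_0 by blast
      with 4 have "x = bit_count 0 (x + y)" by (simp add: bit_count_lowest)
      then show ?thesis unfolding bit_split_def by blast
    qed
  qed
qed

lemma f_defect_eq_0_iff_bit_split: "f_defect x y = 0 \<longleftrightarrow> bit_split (x + y) x"
proof
  assume "bit_split (x + y) x"
  then obtain j where "x = bit_count j (x + y) \<or> x = x + y - bit_count j (x + y)"
    unfolding bit_split_def by blast
  then show "f_defect x y = 0"
  proof
    assume "x = bit_count j (x + y)"
    then show ?thesis using f_defect_bit_count[of j "x + y"] by simp
  next
    assume "x = x + y - bit_count j (x + y)"
    then have "y = bit_count j (x + y)" using bit_count_le[of j "x + y"] by simp
    then show ?thesis using f_defect_bit_count[of j "x + y"] f_defect_commute[of x y] by simp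
  qed
qed (rule bit_split_if_f_defect_eq_0)

lemma clog2_ge: "1 \<le> n \<Longrightarrow> n \<le> 2 ^ clog2 n"
proof -
  assume n: "1 \<le> n"
  have "real n = 2 powr (log 2 (real n))" using n by simp
  also have "\<dots> \<le> 2 powr (real_of_int \<lceil>log 2 (real n)\<rceil>)" by (simp add: le_of_int_ceiling)
  also have "\<dots> = real (2 ^ clog2 n)"
    using n by (simp add: clog2_def powr_realpow [symmetric])
  finally show ?thesis by linarith
qed

lemma beta_eq_of_bool_bit: "beta k m i = of_bool (bit m (k - i))"
  by (simp add: beta_def bit_iff_odd mod_2_eq_odd)

lemma card_beta_eq_1: "card {m. m < n \<and> beta k m i = 1} = bit_count (k - i) n"
proof -
  have "{m. m < n \<and> beta k m i = 1} = {m. m < n \<and> bit m (k - i)}"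
    by (auto simp: beta_eq_of_bool_bit)
  then show ?thesis by (simp add: bit_count_def)
qed

lemma card_beta_eq_0: "card {m. m < n \<and> beta k m i = 0} = n - bit_count (k - i) n"
proof -
  have "{m. m < n \<and> beta k m i = 0} = {..<n} - {m. m < n \<and> bit m (k - i)}"
    by (auto simp: beta_eq_of_bool_bit)
  also have "card \<dots> = card {..<n} - card {m. m < n \<and> bit m (k - i)}"
    by (rule card_Diff_subset) auto
  finally show ?thesis by (simp add: bit_count_def)
qed

lemma HCBP_iff_bit_split:
  assumes "n = n0 + n1" and "n1 \<le> n0" and "1 \<le> n1"
  shows "HCBP n n0 n1 \<longleftrightarrow> bit_split n n1"
proof -
  let ?k = "clog2 n"
  have split_at: "(card {m. m < n \<and> beta ?k m i = 0} = n0 \<and> card {m. m < n \<and> beta ?k m i = 1} = n1 \<or>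
      card {m. m < n \<and> beta ?k m i = 1} = n0 \<and> card {m. m < n \<and> beta ?k m i = 0} = n1) \<longleftrightarrow>
      (n1 = bit_count (?k - i) n \<or> n1 = n - bit_count (?k - i) n)" for i
    unfolding card_beta_eq_0 card_beta_eq_1 using assms(1) bit_count_le[of "?k - i" n] by linarith
  have low_index: "j < ?k" if "n1 = bit_count j n \<or> n1 = n - bit_count j n" for j
  proof (rule ccontr)
    assume "\<not> j < ?k"
    then have "(2::nat) ^ ?k \<le> 2 ^ j" by (simp add: power_increasing)
    then have "n \<le> 2 ^ j" using clog2_ge[of n] assms by linarith
    then show False using that assms bit_count_eq_0[of n j] by simp
  qed
  have "HCBP n n0 n1 \<longleftrightarrow>
      (\<exists>i\<in>{1..?k}. n1 = bit_count (?k - i) n \<or> n1 = n - bit_count (?k - i) n)"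
    unfolding HCBP_def split_at using assms by blast
  also have "\<dots> \<longleftrightarrow> bit_split n n1"
    unfolding bit_split_def
  proof
    assume "\<exists>j. n1 = bit_count j n \<or> n1 = n - bit_count j n"
    then obtain j where j: "n1 = bit_count j n \<or> n1 = n - bit_count j n" by blast
    with low_index have "?k - (?k - j) = j" "?k - j \<in> {1..?k}" by fastforce+
    with j show "\<exists>i\<in>{1..?k}. n1 = bit_count (?k - i) n \<or> n1 = n - bit_count (?k - i) n"
      by metis
  qed blast
  finally show ?thesis .
qed

theorem theorem6:
  fixes n n0 n1 :: nat
  assumes "n \<ge> 2" and "n = n0 + n1" and "n0 \<ge> n1" and "n1 \<ge> 1"
  shows "HCBP n n0 n1 \<longleftrightarrow> f n = n1 + f n1 + f n0"
proof -
  have "f n = n1 + f n1 + f n0 \<longleftrightarrow> f_defect n1 n0 = 0"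
    using assms by (auto simp: f_defect_def min_absorb1 add.commute[of n1])
  also have "\<dots> \<longleftrightarrow> bit_split n n1"
    using assms f_defect_eq_0_iff_bit_split[of n1 n0] by (simp add: add.commute)
  also have "\<dots> \<longleftrightarrow> HCBP n n0 n1"
    using assms HCBP_iff_bit_split by simp
  finally show ?thesis by blast
qed

end
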